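(* Let $A$ be a finite set, $n\ge3$, let $\rho\subseteq A^n$ be a strongly rich relation preserved by a WNU vector-function $(f_1,\dots,f_n)$, and let $\sigma\subseteq A^m$, $m\ge3$, be a totally reflexive relation preserved by $f_1$. Then $\sigma=A^m$.
   Context: $\rho\subseteq A^n$ is strongly rich if for every $(a_1,\dots,a_n)\in A^n$ and every $j$ there is a unique $b\in A$ with $(a_1,\dots,a_{j-1},b,a_{j+1},\dots,a_n)\in\rho$. $\sigma\subseteq A^m$ is totally reflexive if it contains every $(a_1,\dots,a_m)$ with $|\{a_1,\dots,a_m\}|<m$. A WNU is a $k$-ary ($k\ge2$) operation $f$ with $f(x,\dots,x)=x$ and $f(y,x,\dots,x)=f(x,y,x,\dots,x)=\dots=f(x,\dots,x,y)$; a WNU vector-function is a tuple $(f_1,\dots,f_n)$ of $k$-ary WNUs, preserving $\rho$ if applying $f_i$ to the $i$-th coordinates of any $k$ tuples of $\rho$ yields a tuple in $\rho$; a single operation preserves $\sigma$ if applying it coordinatewise to tuples of $\sigma$ yields a tuple of $\sigma$. *)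

theory Defs
  imports Main
begin

definition tuples :: "'a set \<Rightarrow> nat \<Rightarrow> 'a list set" where
  "tuples A n = {xs. length xs = n \<and> set xs \<subseteq> A}"

definition strongly_rich :: "'a set \<Rightarrow> nat \<Rightarrow> 'a list set \<Rightarrow> bool" where
  "strongly_rich A n \<rho> \<longleftrightarrow> \<rho> \<subseteq> tuples A n \<and>
     (\<forall>a \<in> tuples A n. \<forall>j < n. \<exists>!b. b \<in> A \<and> a[j := b] \<in> \<rho>)"

definition totally_reflexive :: "'a set \<Rightarrow> nat \<Rightarrow> 'a list set \<Rightarrow> bool" where
  "totally_reflexive A m \<sigma> \<longleftrightarrow> \<sigma> \<subseteq> tuples A m \<and>
     (\<forall>a \<in> tuples A m. card (set a) < m \<longrightarrow> a \<in> \<sigma>)"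

definition is_op :: "'a set \<Rightarrow> nat \<Rightarrow> ('a list \<Rightarrow> 'a) \<Rightarrow> bool" where
  "is_op A k f \<longleftrightarrow> (\<forall>xs \<in> tuples A k. f xs \<in> A)"

definition is_wnu :: "'a set \<Rightarrow> nat \<Rightarrow> ('a list \<Rightarrow> 'a) \<Rightarrow> bool" where
  "is_wnu A k f \<longleftrightarrow> k \<ge> 2 \<and> is_op A k f \<and>
     (\<forall>x \<in> A. f (replicate k x) = x) \<and>
     (\<forall>x \<in> A. \<forall>y \<in> A. \<forall>i < k. \<forall>j < k.
        f ((replicate k x)[i := y]) = f ((replicate k x)[j := y]))"

(* The vector-function (f_0,...,f_{n-1}) of k-ary operations preserves \<rho>:
   applying f_i to the i-th coordinates of any k tuples of \<rho> gives a tuple of \<rho>. *)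
definition vec_preserves :: "nat \<Rightarrow> nat \<Rightarrow> (nat \<Rightarrow> 'a list \<Rightarrow> 'a) \<Rightarrow> 'a list set \<Rightarrow> bool" where
  "vec_preserves n k f \<rho> \<longleftrightarrow>
     (\<forall>ts. length ts = k \<and> set ts \<subseteq> \<rho> \<longrightarrow>
        map (\<lambda>i. f i (map (\<lambda>t. t ! i) ts)) [0..<n] \<in> \<rho>)"

definition preserves :: "nat \<Rightarrow> nat \<Rightarrow> ('a list \<Rightarrow> 'a) \<Rightarrow> 'a list set \<Rightarrow> bool" where
  "preserves m k g \<sigma> \<longleftrightarrow> vec_preserves m k (\<lambda>_. g) \<sigma>"

end

theory Submission
  imports Defs
begin

(* Freezing all but the first three coordinates of the strongly rich relation \<rho> at some
   tuple R leaves the graph of a quasigroup x \<cdot> y on A, and preservation of \<rho> by the WNU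
   vector-function says f\<^sub>2(x\<^sub>1y\<^sub>1, ..., x\<^sub>ky\<^sub>k) = f\<^sub>0(x) \<cdot> f\<^sub>1(y) (indices of f and of
   tuple entries start at 0). Shifting the boundary of a block p...pq...q one position at a
   time, and using cancellation together with the WNU identity of f\<^sub>0, one sees that
   f\<^sub>2(p,...,p,q,...,q) always lies in the image of x \<mapsto> f\<^sub>2(x,p,...,p); at the empty p-block
   this makes that map onto, and hence also u \<mapsto> f\<^sub>0(u,a,...,a) onto A for every a.
   Now any m-tuple t is f\<^sub>0 applied columnwise to the k rows (u\<^sub>0,t\<^sub>1,t\<^sub>1,t\<^sub>3,...),
   (t\<^sub>1,t\<^sub>1,u\<^sub>2,t\<^sub>3,...), (t\<^sub>1,t\<^sub>1,t\<^sub>1,t\<^sub>3,...), ..., where f\<^sub>0(u\<^sub>0,t\<^sub>1,...,t\<^sub>1) = t\<^sub>0 and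
   f\<^sub>0(t\<^sub>1,u\<^sub>2,t\<^sub>1,...,t\<^sub>1) = t\<^sub>2. Every row repeats an entry, so lies in the totally reflexive
   \<sigma>, and therefore t \<in> \<sigma>. *)

lemma map_upt_if_eq_list_update:
  "j < k \<Longrightarrow> map (\<lambda>i. if i = j then x else c) [0..<k] = (replicate k c)[j := x]"
  by (rule nth_equalityI) auto

lemma is_wnu_arity: "is_wnu A k g \<Longrightarrow> 2 \<le> k"
  by (simp add: is_wnu_def)

lemma is_wnu_closed:
  assumes "is_wnu A k g" and "\<forall>i<k. v i \<in> A"
  shows "g (map v [0..<k]) \<in> A"
proof -
  have "map v [0..<k] \<in> tuples A k" using assms(2) by (auto simp: tuples_def)
  then show ?thesis using assms(1) by (simp add: is_wnu_def is_op_def)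
qed

lemma is_wnu_idem: "is_wnu A k g \<Longrightarrow> c \<in> A \<Longrightarrow> g (replicate k c) = c"
  by (simp add: is_wnu_def)

lemma is_wnu_update:
  "is_wnu A k g \<Longrightarrow> c \<in> A \<Longrightarrow> x \<in> A \<Longrightarrow> i < k \<Longrightarrow> j < k \<Longrightarrow>
     g ((replicate k c)[i := x]) = g ((replicate k c)[j := x])"
  unfolding is_wnu_def by blast

lemma vec_preserves_rows:
  assumes "vec_preserves n k f \<rho>" and "\<And>p. p < k \<Longrightarrow> rows p \<in> \<rho>"
  shows "map (\<lambda>i. f i (map (\<lambda>p. rows p ! i) [0..<k])) [0..<n] \<in> \<rho>"
proof -
  have "length (map rows [0..<k]) = k \<and> set (map rows [0..<k]) \<subseteq> \<rho>"
    using assms(2) by auto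
  with assms(1) have "map (\<lambda>i. f i (map (\<lambda>t. t ! i) (map rows [0..<k]))) [0..<n] \<in> \<rho>"
    unfolding vec_preserves_def by blast
  then show ?thesis by (simp add: comp_def)
qed

locale quasigroup_on =
  fixes A :: "'a set" and mult :: "'a \<Rightarrow> 'a \<Rightarrow> 'a" (infixl "\<cdot>" 70)
  assumes mult_closed: "x \<in> A \<Longrightarrow> y \<in> A \<Longrightarrow> x \<cdot> y \<in> A"
    and left_divisible: "x \<in> A \<Longrightarrow> z \<in> A \<Longrightarrow> \<exists>y\<in>A. x \<cdot> y = z"
    and right_divisible: "y \<in> A \<Longrightarrow> z \<in> A \<Longrightarrow> \<exists>x\<in>A. x \<cdot> y = z"
    and left_cancel: "x \<in> A \<Longrightarrow> y \<in> A \<Longrightarrow> y' \<in> A \<Longrightarrow> x \<cdot> y = x \<cdot> y' \<Longrightarrow> y = y'"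
    and right_cancel: "x \<in> A \<Longrightarrow> x' \<in> A \<Longrightarrow> y \<in> A \<Longrightarrow> x \<cdot> y = x' \<cdot> y \<Longrightarrow> x = x'"

locale graph_polymorphism = quasigroup_on +
  fixes k :: nat and F0 F1 F2 :: "'a list \<Rightarrow> 'a"
  assumes arity_pos: "0 < k"
    and F0_closed: "\<forall>i<k. v i \<in> A \<Longrightarrow> F0 (map v [0..<k]) \<in> A"
    and F1_closed: "\<forall>i<k. w i \<in> A \<Longrightarrow> F1 (map w [0..<k]) \<in> A"
    and F0_idem: "c \<in> A \<Longrightarrow> F0 (replicate k c) = c"
    and F1_idem: "c \<in> A \<Longrightarrow> F1 (replicate k c) = c"
    and F2_idem: "c \<in> A \<Longrightarrow> F2 (replicate k c) = c"
    and F0_weak_nu: "c \<in> A \<Longrightarrow> x \<in> A \<Longrightarrow> i < k \<Longrightarrow> j < k \<Longrightarrow>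
       F0 ((replicate k c)[i := x]) = F0 ((replicate k c)[j := x])"
    and preserves_graph: "\<forall>i<k. v i \<in> A \<Longrightarrow> \<forall>i<k. w i \<in> A \<Longrightarrow>
       F2 (map (\<lambda>i. v i \<cdot> w i) [0..<k]) = F0 (map v [0..<k]) \<cdot> F1 (map w [0..<k])"
begin

lemma F2_left_mult:
  assumes "c \<in> A" and "\<forall>i<k. y i \<in> A"
  shows "F2 (map (\<lambda>i. c \<cdot> y i) [0..<k]) = c \<cdot> F1 (map y [0..<k])"
  using preserves_graph[of "\<lambda>_. c" y] F0_idem[of c] assms by (simp add: map_replicate_const)

lemma F2_right_mult:
  assumes "c \<in> A" and "\<forall>i<k. x i \<in> A"
  shows "F2 (map (\<lambda>i. x i \<cdot> c) [0..<k]) = F0 (map x [0..<k]) \<cdot> c"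
  using preserves_graph[of x "\<lambda>_. c"] F1_idem[of c] assms by (simp add: map_replicate_const)

lemma F2_blocks_shift:
  assumes n: "n < k" and p: "p \<in> A" and q: "q \<in> A" and y: "y \<in> A"
    and shifted: "F2 (map (\<lambda>i. if i < Suc n then p else q) [0..<k])
                    = F2 (map (\<lambda>i. if i = 0 then y else p) [0..<k])"
  shows "\<exists>x\<in>A. F2 (map (\<lambda>i. if i < n then p else q) [0..<k])
                 = F2 (map (\<lambda>i. if i = 0 then x else p) [0..<k])"
proof -
  (* The block with n copies of p is X \<cdot> Y for X = (p,...,p,d,p,...,p) with d at position n
     and Y = (p',...,p',q',...,q') with n+1 copies of p', while the block with n+1 copies is p \<cdot> Y. *)
  obtain p' where p': "p' \<in> A" "p \<cdot> p' = p" using left_divisible[OF p p] by blast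
  obtain q' where q': "q' \<in> A" "p \<cdot> q' = q" using left_divisible[OF p q] by blast
  obtain d where d: "d \<in> A" "d \<cdot> p' = q" using right_divisible[OF p'(1) q] by blast
  obtain x where x: "x \<in> A" "p \<cdot> x = y" using left_divisible[OF p y] by blast
  define X where "X i = (if i = n then d else p)" for i :: nat
  define Y where "Y i = (if i \<le> n then p' else q')" for i :: nat
  define Z where "Z i = (if i = 0 then x else p')" for i :: nat
  have YA: "\<forall>i<k. Y i \<in> A" and ZA: "\<forall>i<k. Z i \<in> A"
    using p' q' x by (auto simp: Y_def Z_def)
  have "p \<cdot> F1 (map Y [0..<k]) = F2 (map (\<lambda>i. p \<cdot> Y i) [0..<k])"
    by (rule F2_left_mult[OF p YA, symmetric])
  also have "\<dots> = F2 (map (\<lambda>i. if i < Suc n then p else q) [0..<k])"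
    by (intro arg_cong[where f = F2] map_cong) (auto simp: Y_def p' q')
  also have "\<dots> = F2 (map (\<lambda>i. p \<cdot> Z i) [0..<k])"
    unfolding shifted by (intro arg_cong[where f = F2] map_cong) (auto simp: Z_def p' x)
  also have "\<dots> = p \<cdot> F1 (map Z [0..<k])"
    using F2_left_mult[OF p ZA] .
  finally have YZ: "F1 (map Y [0..<k]) = F1 (map Z [0..<k])"
    by (rule left_cancel[OF p F1_closed[OF YA] F1_closed[OF ZA]])
  have "F0 (map X [0..<k]) = F0 ((replicate k p)[n := d])"
    unfolding X_def using map_upt_if_eq_list_update[of n k d p] n by simp
  also have "\<dots> = F0 ((replicate k p)[0 := d])"
    using F0_weak_nu[OF p d(1)] n arity_pos by blast
  also have "\<dots> = F0 (map (\<lambda>i. if i = 0 then d else p) [0..<k])"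
    using map_upt_if_eq_list_update[of 0 k d p] arity_pos by simp
  finally have X: "F0 (map X [0..<k]) = F0 (map (\<lambda>i. if i = 0 then d else p) [0..<k])" .
  have "F2 (map (\<lambda>i. if i < n then p else q) [0..<k]) = F2 (map (\<lambda>i. X i \<cdot> Y i) [0..<k])"
    by (intro arg_cong[where f = F2] map_cong) (auto simp: X_def Y_def p' q' d)
  also have "\<dots> = F0 (map X [0..<k]) \<cdot> F1 (map Y [0..<k])"
    using p d p' q' by (intro preserves_graph) (auto simp: X_def Y_def)
  also have "\<dots> = F0 (map (\<lambda>i. if i = 0 then d else p) [0..<k]) \<cdot> F1 (map Z [0..<k])"
    unfolding X YZ ..
  also have "\<dots> = F2 (map (\<lambda>i. (if i = 0 then d else p) \<cdot> Z i) [0..<k])"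
    using p d ZA by (intro preserves_graph[symmetric]) auto
  also have "\<dots> = F2 (map (\<lambda>i. if i = 0 then d \<cdot> x else p) [0..<k])"
    by (intro arg_cong[where f = F2] map_cong) (auto simp: Z_def p')
  finally show ?thesis using mult_closed[OF d(1) x(1)] by blast
qed

lemma F2_blocks_in_image:
  assumes "j \<le> k" and p: "p \<in> A" and q: "q \<in> A"
  shows "\<exists>x\<in>A. F2 (map (\<lambda>i. if i < j then p else q) [0..<k])
                 = F2 (map (\<lambda>i. if i = 0 then x else p) [0..<k])"
  using assms(1)
proof (induction j rule: inc_induct)
  case base
  have "F2 (map (\<lambda>i. if i < k then p else q) [0..<k])
      = F2 (map (\<lambda>i. if i = 0 then p else p) [0..<k])"
    by (intro arg_cong[where f = F2] map_cong) auto
  then show ?case using p by blast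
next
  case (step n)
  then show ?case using F2_blocks_shift p q by blast
qed

lemma F0_first_arg_surj:
  assumes a: "a \<in> A" and t: "t \<in> A"
  shows "\<exists>u\<in>A. F0 ((replicate k a)[0 := u]) = t"
proof -
  have "F2 (map (\<lambda>i. if i < 0 then a \<cdot> a else t \<cdot> a) [0..<k]) = t \<cdot> a"
    using F2_idem[OF mult_closed[OF t a]] by (simp add: map_replicate_const)
  then obtain z where z: "z \<in> A" "t \<cdot> a = F2 (map (\<lambda>i. if i = 0 then z else a \<cdot> a) [0..<k])"
    using F2_blocks_in_image[OF le0 mult_closed[OF a a] mult_closed[OF t a]] by auto
  obtain u where u: "u \<in> A" "u \<cdot> a = z" using right_divisible[OF a z(1)] by blast
  define U where "U i = (if i = 0 then u else a)" for i :: nat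
  have UA: "\<forall>i<k. U i \<in> A" using a u by (simp add: U_def)
  have "t \<cdot> a = F2 (map (\<lambda>i. U i \<cdot> a) [0..<k])"
    unfolding z(2) by (intro arg_cong[where f = F2] map_cong) (auto simp: U_def u)
  also have "\<dots> = F0 (map U [0..<k]) \<cdot> a" using F2_right_mult[OF a UA] .
  finally have "t = F0 (map U [0..<k])" by (rule right_cancel[OF t F0_closed[OF UA] a])
  then show ?thesis
    unfolding U_def using u(1) map_upt_if_eq_list_update[of 0 k u a] arity_pos by auto
qed

end

locale rich_slice =
  fixes A :: "'a set" and n :: nat and \<rho> :: "'a list set" and R :: "'a list"
  assumes strongly_rich: "strongly_rich A n \<rho>"
    and arity: "3 \<le> n"
    and frozen_tuple: "R \<in> tuples A (n - 3)"
begin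

definition slice_mult :: "'a \<Rightarrow> 'a \<Rightarrow> 'a" where
  "slice_mult x y = (THE z. z \<in> A \<and> [x, y, z] @ R \<in> \<rho>)"

lemma unique_completion:
  assumes "xs \<in> tuples A 3" and "j < 3"
  shows "\<exists>!b. b \<in> A \<and> xs[j := b] @ R \<in> \<rho>"
proof -
  have "xs @ R \<in> tuples A n" and "j < n"
    using assms frozen_tuple arity by (auto simp: tuples_def)
  then have "\<exists>!b. b \<in> A \<and> (xs @ R)[j := b] \<in> \<rho>"
    using strongly_rich unfolding strongly_rich_def by blast
  then show ?thesis using assms by (simp add: list_update_append tuples_def)
qed

lemma slice_mult_graph:
  assumes "x \<in> A" and "y \<in> A"
  shows "slice_mult x y \<in> A \<and> [x, y, slice_mult x y] @ R \<in> \<rho>"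
proof -
  have "\<exists>!z. z \<in> A \<and> [x, y, z] @ R \<in> \<rho>"
    using unique_completion[of "[x, y, x]" 2] assms by (simp add: tuples_def)
  then show ?thesis unfolding slice_mult_def by (rule theI')
qed

lemma slice_graph_iff:
  assumes "x \<in> A" and "y \<in> A" and "z \<in> A"
  shows "[x, y, z] @ R \<in> \<rho> \<longleftrightarrow> slice_mult x y = z"
proof -
  have "\<exists>!z. z \<in> A \<and> [x, y, z] @ R \<in> \<rho>"
    using unique_completion[of "[x, y, z]" 2] assms by (simp add: tuples_def)
  then show ?thesis using slice_mult_graph[OF assms(1,2)] assms(3) by blast
qed

sublocale quasigroup_on A slice_mult
proof
  fix x y z x' y'
  assume x: "x \<in> A" and y: "y \<in> A" and z: "z \<in> A" and x': "x' \<in> A" and y': "y' \<in> A"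
  show "slice_mult x y \<in> A" using slice_mult_graph[OF x y] ..
  have left: "\<exists>!b. b \<in> A \<and> [x, b, z] @ R \<in> \<rho>"
    using unique_completion[of "[x, x, z]" 1] x z by (simp add: tuples_def)
  have right: "\<exists>!b. b \<in> A \<and> [b, y, z] @ R \<in> \<rho>"
    using unique_completion[of "[x, y, z]" 0] x y z by (simp add: tuples_def)
  show "\<exists>y\<in>A. slice_mult x y = z" using left slice_graph_iff x z by blast
  show "\<exists>x\<in>A. slice_mult x y = z" using right slice_graph_iff y z by blast
  show "slice_mult x y = slice_mult x y' \<Longrightarrow> y = y'"
    using unique_completion[of "[x, y, slice_mult x y]" 1] slice_mult_graph x y y'
    by (simp add: tuples_def) metis
  show "slice_mult x y = slice_mult x' y \<Longrightarrow> x = x'"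
    using unique_completion[of "[x, y, slice_mult x y]" 0] slice_mult_graph x x' y
    by (simp add: tuples_def) metis
qed

lemma slice_mult_preserved:
  assumes pres: "vec_preserves n k f \<rho>" and wnu: "\<forall>i<n. is_wnu A k (f i)"
    and x: "\<forall>p<k. x p \<in> A" and y: "\<forall>p<k. y p \<in> A"
  shows "f 2 (map (\<lambda>p. slice_mult (x p) (y p)) [0..<k])
           = slice_mult (f 0 (map x [0..<k])) (f 1 (map y [0..<k]))"
proof -
  define rows where "rows p = [x p, y p, slice_mult (x p) (y p)] @ R" for p
  have "rows p \<in> \<rho>" if "p < k" for p
    using slice_mult_graph x y that by (simp add: rows_def)
  then have columnwise: "map (\<lambda>i. f i (map (\<lambda>p. rows p ! i) [0..<k])) [0..<n] \<in> \<rho>"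
    by (rule vec_preserves_rows[OF pres])
  have R: "length R = n - 3" "\<And>i. i < n - 3 \<Longrightarrow> R ! i \<in> A"
    using frozen_tuple by (auto simp: tuples_def)
  have "map (\<lambda>i. f i (map (\<lambda>p. rows p ! i) [0..<k])) [0..<n]
      = [f 0 (map x [0..<k]), f 1 (map y [0..<k]),
         f 2 (map (\<lambda>p. slice_mult (x p) (y p)) [0..<k])] @ R"
  proof (rule nth_equalityI)
    fix i assume "i < length (map (\<lambda>i. f i (map (\<lambda>p. rows p ! i) [0..<k])) [0..<n])"
    then have i: "i < n" by simp
    consider "i = 0" | "i = 1" | "i = 2" | "3 \<le> i" by linarith
    then show "map (\<lambda>i. f i (map (\<lambda>p. rows p ! i) [0..<k])) [0..<n] ! i
        = ([f 0 (map x [0..<k]), f 1 (map y [0..<k]),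
            f 2 (map (\<lambda>p. slice_mult (x p) (y p)) [0..<k])] @ R) ! i"
    proof cases
      case 4
      have "map (\<lambda>p. rows p ! i) [0..<k] = replicate k (R ! (i - 3))"
        using 4 by (simp add: rows_def nth_append map_replicate_const numeral_3_eq_3)
      moreover have "R ! (i - 3) \<in> A" using 4 i R by simp
      ultimately show ?thesis
        using 4 R is_wnu_idem[of A k "f i"] wnu i by (simp add: nth_append numeral_3_eq_3)
    qed (use i arity in \<open>simp_all add: rows_def numeral_2_eq_2\<close>)
  qed (use arity R in simp)
  with columnwise have "[f 0 (map x [0..<k]), f 1 (map y [0..<k]),
      f 2 (map (\<lambda>p. slice_mult (x p) (y p)) [0..<k])] @ R \<in> \<rho>"
    by simp
  moreover have "f 0 (map x [0..<k]) \<in> A" "f 1 (map y [0..<k]) \<in> A"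
    and "f 2 (map (\<lambda>p. slice_mult (x p) (y p)) [0..<k]) \<in> A"
    using wnu arity x y mult_closed by (intro is_wnu_closed; auto)+
  ultimately show ?thesis using slice_graph_iff by simp
qed

lemma first_arg_surj:
  assumes "vec_preserves n k f \<rho>" and wnu: "\<forall>i<n. is_wnu A k (f i)"
    and "a \<in> A" and "t \<in> A"
  shows "\<exists>u\<in>A. f 0 ((replicate k a)[0 := u]) = t"
proof -
  have f: "is_wnu A k (f 0)" "is_wnu A k (f 1)" "is_wnu A k (f 2)"
    using wnu arity by auto
  interpret graph_polymorphism A slice_mult k "f 0" "f 1" "f 2"
  proof
    show "0 < k" using is_wnu_arity[OF f(1)] by simp
  qed (use f is_wnu_closed is_wnu_idem is_wnu_update slice_mult_preserved[OF assms(1,2)] in auto)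
  show ?thesis using F0_first_arg_surj assms(3,4) .
qed

end

lemma strongly_rich_wnu_first_arg_surj:
  assumes "strongly_rich A n \<rho>" and "3 \<le> n" and "\<forall>i<n. is_wnu A k (f i)"
    and "vec_preserves n k f \<rho>" and "a \<in> A" and "t \<in> A"
  shows "\<exists>u\<in>A. f 0 ((replicate k a)[0 := u]) = t"
proof -
  interpret rich_slice A n \<rho> "replicate (n - 3) a"
    using assms(1,2,5) by unfold_locales (auto simp: tuples_def)
  show ?thesis by (rule first_arg_surj[OF assms(4,3,5,6)])
qed

lemma totally_reflexive_eq_tuples:
  assumes m: "3 \<le> m" and total_refl: "totally_reflexive A m \<sigma>"
    and pres: "preserves m k g \<sigma>" and wnu: "is_wnu A k g"
    and surj: "\<And>a t. a \<in> A \<Longrightarrow> t \<in> A \<Longrightarrow> \<exists>u\<in>A. g ((replicate k a)[0 := u]) = t"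
  shows "\<sigma> = tuples A m"
proof
  show "\<sigma> \<subseteq> tuples A m" using total_refl by (simp add: totally_reflexive_def)
  show "tuples A m \<subseteq> \<sigma>"
  proof
    fix t assume t: "t \<in> tuples A m"
    then have len: "length t = m" and tA: "\<And>i. i < m \<Longrightarrow> t ! i \<in> A"
      by (auto simp: tuples_def)
    have k: "2 \<le> k" using is_wnu_arity[OF wnu] .
    have t012: "t ! 0 \<in> A" "t ! 1 \<in> A" "t ! 2 \<in> A" using tA m by auto
    obtain u1 where u1: "u1 \<in> A" "g ((replicate k (t ! 1))[0 := u1]) = t ! 0"
      using surj t012 by blast
    obtain u3 where u3: "u3 \<in> A" "g ((replicate k (t ! 1))[0 := u3]) = t ! 2"
      using surj t012 by blast
    have u3': "g ((replicate k (t ! 1))[1 := u3]) = t ! 2"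
      using is_wnu_update[OF wnu t012(2) u3(1), of 1 0] k u3(2) by simp
    define rows where "rows p = [if p = 0 then u1 else t ! 1, t ! 1, if p = 1 then u3 else t ! 1]
        @ drop 3 t" for p :: nat
    have rows_length: "length (rows p) = m" for p using len m by (simp add: rows_def)
    have "rows p \<in> \<sigma>" for p
    proof -
      have "rows p \<in> tuples A m"
        using rows_length t t012 u1 u3 set_drop_subset[of 3 t]
        by (auto simp: rows_def tuples_def)
      moreover have "\<not> distinct (rows p)" by (cases "p = 0") (simp_all add: rows_def)
      then have "card (set (rows p)) \<noteq> length (rows p)" using card_distinct by blast
      then have "card (set (rows p)) < m" using card_length[of "rows p"] rows_length by simp
      ultimately show ?thesis using total_refl by (simp add: totally_reflexive_def)
    qed
    then have "map (\<lambda>i. g (map (\<lambda>p. rows p ! i) [0..<k])) [0..<m] \<in> \<sigma>"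
      using pres unfolding preserves_def by (intro vec_preserves_rows)
    moreover have "map (\<lambda>i. g (map (\<lambda>p. rows p ! i) [0..<k])) [0..<m] = t"
    proof (rule nth_equalityI)
      fix i assume "i < length (map (\<lambda>i. g (map (\<lambda>p. rows p ! i) [0..<k])) [0..<m])"
      then have i: "i < m" by simp
      consider "i = 0" | "i = 1" | "i = 2" | "3 \<le> i" by linarith
      then have "g (map (\<lambda>p. rows p ! i) [0..<k]) = t ! i"
      proof cases
        case 1
        then have "map (\<lambda>p. rows p ! i) [0..<k] = (replicate k (t ! 1))[0 := u1]"
          using map_upt_if_eq_list_update[of 0 k u1 "t ! 1"] k by (simp add: rows_def)
        then show ?thesis using u1 1 by simp
      next
        case 2
        then have "map (\<lambda>p. rows p ! i) [0..<k] = replicate k (t ! 1)"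
          by (simp add: rows_def map_replicate_const)
        then show ?thesis using 2 is_wnu_idem[OF wnu t012(2)] by simp
      next
        case 3
        then have "map (\<lambda>p. rows p ! i) [0..<k] = (replicate k (t ! 1))[1 := u3]"
          using map_upt_if_eq_list_update[of 1 k u3 "t ! 1"] k by (simp add: rows_def)
        then show ?thesis using u3' 3 by simp
      next
        case 4
        then have "map (\<lambda>p. rows p ! i) [0..<k] = replicate k (t ! i)"
          using i len by (simp add: rows_def nth_append map_replicate_const)
        then show ?thesis using is_wnu_idem[OF wnu tA[OF i]] by simp
      qed
      then show "map (\<lambda>i. g (map (\<lambda>p. rows p ! i) [0..<k])) [0..<m] ! i = t ! i"
        using i by simp
    qed (simp add: len)
    ultimately show "t \<in> \<sigma>" by simp
  qed
qed

theorem mainTheorem18: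
  fixes A :: "'a set" and n m k :: nat
    and \<rho> \<sigma> :: "'a list set" and f :: "nat \<Rightarrow> 'a list \<Rightarrow> 'a"
  assumes "finite A"
    and "n \<ge> 3"
    and "strongly_rich A n \<rho>"
    and "\<forall>i < n. is_wnu A k (f i)"
    and "vec_preserves n k f \<rho>"
    and "m \<ge> 3"
    and "totally_reflexive A m \<sigma>"
    and "preserves m k (f 0) \<sigma>"
  shows "\<sigma> = tuples A m"
proof (rule totally_reflexive_eq_tuples)
  show "is_wnu A k (f 0)" using assms(2,4) by simp
  show "\<exists>u\<in>A. f 0 ((replicate k a)[0 := u]) = t" if "a \<in> A" and "t \<in> A" for a t
    by (rule strongly_rich_wnu_first_arg_surj[OF assms(3,2,4,5) that])
qed (use assms(6-8) in auto)

end
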